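(* Let $A$ be a cyclic Leibniz algebra generated by $a$, with $p(x)$ as in the context. Then $\Phi(A)=0$ if and only if $p(x)$ is a product of distinct irreducible factors (i.e. $n_1=\cdots=n_s=1$).
   Context: A (left) Leibniz algebra is an algebra satisfying $x(yz)=(xy)z+y(xz)$ for all $x,y,z$; all algebras are finite-dimensional over a field $F$. $A$ is a cyclic Leibniz algebra generated by $a$: $A$ is generated as an algebra by the single element $a$, and with $a^1=a$, $a^{k+1}=aa^k$, the elements $a,a^2,\dots,a^n$ form a basis of $A$. Write $aa^n=\alpha_2a^2+\cdots+\alpha_na^n$. $L_a:A\to A$ is $b\mapsto ab$, with characteristic (and minimal) polynomial $p(x)=x^n-\alpha_nx^{n-1}-\cdots-\alpha_2x=p_1(x)^{n_1}\cdots p_s(x)^{n_s}$, the $p_j$ distinct monic irreducibles over $F$, $p_1(x)=x$. $\Phi(A)$ is the intersection of all maximal subalgebras of $A$. *)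

theory Defs
  imports Main "HOL-Computational_Algebra.Polynomial" "HOL-Computational_Algebra.Squarefree"
begin

definition bilinear_product :: "('f::field \<Rightarrow> 'v::ab_group_add \<Rightarrow> 'v) \<Rightarrow> ('v \<Rightarrow> 'v \<Rightarrow> 'v) \<Rightarrow> bool" where
  "bilinear_product scale mul \<longleftrightarrow>
     (\<forall>x y z. mul (x + y) z = mul x z + mul y z) \<and>
     (\<forall>x y z. mul x (y + z) = mul x y + mul x z) \<and>
     (\<forall>c x y. mul (scale c x) y = scale c (mul x y)) \<and>
     (\<forall>c x y. mul x (scale c y) = scale c (mul x y))"

definition left_leibniz :: "('v::ab_group_add \<Rightarrow> 'v \<Rightarrow> 'v) \<Rightarrow> bool" where
  "left_leibniz mul \<longleftrightarrow>
     (\<forall>x y z. mul x (mul y z) = mul (mul x y) z + mul y (mul x z))"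

definition leibniz_algebra :: "('f::field \<Rightarrow> 'v::ab_group_add \<Rightarrow> 'v) \<Rightarrow> ('v \<Rightarrow> 'v \<Rightarrow> 'v) \<Rightarrow> bool" where
  "leibniz_algebra scale mul \<longleftrightarrow>
     vector_space scale \<and> bilinear_product scale mul \<and> left_leibniz mul"

definition subalgebra :: "('f::field \<Rightarrow> 'v::ab_group_add \<Rightarrow> 'v) \<Rightarrow> ('v \<Rightarrow> 'v \<Rightarrow> 'v) \<Rightarrow> 'v set \<Rightarrow> bool" where
  "subalgebra scale mul S \<longleftrightarrow>
     module.subspace scale S \<and> (\<forall>x\<in>S. \<forall>y\<in>S. mul x y \<in> S)"

definition maximal_subalgebra :: "('f::field \<Rightarrow> 'v::ab_group_add \<Rightarrow> 'v) \<Rightarrow> ('v \<Rightarrow> 'v \<Rightarrow> 'v) \<Rightarrow> 'v set \<Rightarrow> bool" where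
  "maximal_subalgebra scale mul M \<longleftrightarrow>
     subalgebra scale mul M \<and> M \<noteq> UNIV \<and>
     (\<forall>T. subalgebra scale mul T \<and> M \<subseteq> T \<longrightarrow> T = M \<or> T = UNIV)"

definition frattini :: "('f::field \<Rightarrow> 'v::ab_group_add \<Rightarrow> 'v) \<Rightarrow> ('v \<Rightarrow> 'v \<Rightarrow> 'v) \<Rightarrow> 'v set" where
  "frattini scale mul = \<Inter>{M. maximal_subalgebra scale mul M}"

definition lpow :: "('v \<Rightarrow> 'v \<Rightarrow> 'v) \<Rightarrow> 'v \<Rightarrow> nat \<Rightarrow> 'v" where
  "lpow mul a k = (mul a ^^ (k - 1)) a"

definition generated_by :: "('f::field \<Rightarrow> 'v::ab_group_add \<Rightarrow> 'v) \<Rightarrow> ('v \<Rightarrow> 'v \<Rightarrow> 'v) \<Rightarrow> 'v \<Rightarrow> bool" where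
  "generated_by scale mul a \<longleftrightarrow> (\<forall>S. subalgebra scale mul S \<and> a \<in> S \<longrightarrow> S = UNIV)"

text \<open>p(x) = x^n - alpha_n x^(n-1) - ... - alpha_2 x, where a a^n = sum_{k=2..n} alpha_k a^k.\<close>
definition cyc_poly :: "nat \<Rightarrow> (nat \<Rightarrow> 'f::field) \<Rightarrow> 'f poly" where
  "cyc_poly n \<alpha> = monom 1 n - (\<Sum>k=2..n. monom (\<alpha> k) (k - 1))"

end

theory Submission
  imports Defs
begin

text \<open>
  Let \<open>A\<close> have basis \<open>a, a\<^sup>2, \<dots>, a\<^sup>n\<close> with \<open>a a\<^sup>n = \<Sum> \<alpha>\<^sub>k a\<^sup>k\<close>, and write \<open>La\<close> for left
  multiplication by \<open>a\<close>.  The Leibniz identity makes \<open>A2 = span {a\<^sup>2, \<dots>, a\<^sup>n}\<close> a left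
  annihilator, so \<open>x y = s (a y)\<close> whenever \<open>x \<equiv> s a\<close> modulo \<open>A2\<close>.  Consequently invariant
  subspaces are subalgebras, subalgebras not inside \<open>A2\<close> are invariant, and every maximal
  subalgebra is either \<open>A2\<close> or \<open>La\<close>-invariant.  Evaluating polynomials at \<open>La\<close> on \<open>a\<close>
  identifies \<open>A\<close> with the \<open>F[x]\<close>-module \<open>F[x]/(p)\<close>, turning invariant subspaces into ideals.

  If \<open>p\<close> is squarefree, the submodules \<open>q A\<close> for the irreducible factors \<open>q\<close> of \<open>p\<close> are
  maximal subalgebras with trivial intersection.  If \<open>d\<^sup>2 k = p\<close> with \<open>d\<close> a non-unit, then
  \<open>(d k)(La) a \<noteq> 0\<close> lies in \<open>A2\<close> and in every maximal invariant subalgebra, since the latter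
  correspond to prime ideals of \<open>F[x]\<close> containing \<open>p = d (d k)\<close>.
\<close>

text \<open>In a Euclidean ring some linear combination of \<open>f\<close> and \<open>g\<close> divides both; it is obtained
  as a nonzero combination of least Euclidean size.\<close>

lemma euclidean_bezout_divisor:
  fixes f g :: "'a::euclidean_ring"
  shows "\<exists>u w. (u * f + w * g) dvd f \<and> (u * f + w * g) dvd g"
proof (cases "f = 0 \<and> g = 0")
  case True
  then show ?thesis by auto
next
  case False
  define comb where "comb = (\<lambda>(u, w). u * f + w * g)"
  have "comb (1, 0) \<noteq> 0 \<or> comb (0, 1) \<noteq> 0"
    using False by (auto simp: comb_def)
  then obtain c0 where "comb c0 \<noteq> 0" by blast
  then obtain c where c: "comb c \<noteq> 0"
    and least: "\<And>c'. comb c' \<noteq> 0 \<Longrightarrow> euclidean_size (comb c) \<le> euclidean_size (comb c')"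
    using ex_has_least_nat[of "\<lambda>c. comb c \<noteq> 0" c0 "\<lambda>c. euclidean_size (comb c)"] by blast
  have divides: "comb c dvd comb c'" for c'
  proof -
    define q where "q = comb c' div comb c"
    have rem: "comb c' mod comb c = comb (fst c' - q * fst c, snd c' - q * snd c)"
      by (simp add: comb_def q_def case_prod_beta minus_div_mult_eq_mod[symmetric] algebra_simps)
    have "comb c' mod comb c = 0"
    proof (rule ccontr)
      assume "comb c' mod comb c \<noteq> 0"
      then have "euclidean_size (comb c) \<le> euclidean_size (comb c' mod comb c)"
        using least rem by metis
      with mod_size_less[OF c, of "comb c'"] show False by simp
    qed
    then show ?thesis by (simp add: mod_eq_0_iff_dvd)
  qed
  show ?thesis
    using divides[of "(1, 0)"] divides[of "(0, 1)"] by (auto simp: comb_def case_prod_beta)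
qed

lemma irreducible_bezout:
  fixes q f :: "'a::euclidean_ring"
  assumes q: "irreducible q" and not_dvd: "\<not> q dvd f"
  shows "\<exists>u w. u * q + w * f = 1"
proof -
  obtain u w where d: "(u * q + w * f) dvd q" "(u * q + w * f) dvd f"
    using euclidean_bezout_divisor by blast
  define d where "d = u * q + w * f"
  have "is_unit d"
    using irreducibleD'[OF q d(1)[folded d_def]] d(2) not_dvd dvd_trans
    unfolding d_def by blast
  then obtain k where "1 = d * k" by (auto elim: dvdE)
  then have "(k * u) * q + (k * w) * f = 1" by (simp add: d_def algebra_simps)
  then show ?thesis by blast
qed

text \<open>Every nonzero non-unit has an irreducible divisor: take a non-unit divisor of least size.\<close>

lemma irreducible_divisor_exists:
  fixes e :: "'a::euclidean_semiring"
  assumes "e \<noteq> 0" and "\<not> is_unit e"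
  shows "\<exists>q. irreducible q \<and> q dvd e"
proof -
  define nonunit_divisor where "nonunit_divisor q \<longleftrightarrow> q dvd e \<and> \<not> is_unit q" for q
  have "nonunit_divisor e" using assms by (simp add: nonunit_divisor_def)
  then obtain q where q: "nonunit_divisor q"
    and least: "\<And>r. nonunit_divisor r \<Longrightarrow> euclidean_size q \<le> euclidean_size r"
    using ex_has_least_nat[of nonunit_divisor e euclidean_size] by blast
  have "q \<noteq> 0" using q assms by (auto simp: nonunit_divisor_def)
  have "irreducible q"
  proof (rule irreducibleI)
    show "q \<noteq> 0" by fact
    show "\<not> is_unit q" using q by (simp add: nonunit_divisor_def)
    fix x y assume xy: "q = x * y"
    show "is_unit x \<or> is_unit y"
    proof (rule ccontr)
      assume nonunits: "\<not> (is_unit x \<or> is_unit y)"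
      have "x \<noteq> 0" "y \<noteq> 0" using xy \<open>q \<noteq> 0\<close> by auto
      have "nonunit_divisor x"
        using q xy nonunits by (auto simp: nonunit_divisor_def intro: dvd_trans)
      then have "euclidean_size q \<le> euclidean_size x" by (rule least)
      moreover have "euclidean_size x < euclidean_size (y * x)"
        using euclidean_size_times_nonunit \<open>x \<noteq> 0\<close> \<open>y \<noteq> 0\<close> nonunits by blast
      ultimately show False using xy by (simp add: mult.commute)
    qed
  qed
  then show ?thesis using q by (auto simp: nonunit_divisor_def)
qed

lemma squarefree_dvd_if_irreducible_divisors_dvd:
  fixes p f :: "'a::euclidean_ring"
  assumes sqf: "squarefree p"
    and divisors: "\<And>q. irreducible q \<Longrightarrow> q dvd p \<Longrightarrow> q dvd f"
  shows "p dvd f"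
proof -
  obtain u w where "(u * f + w * p) dvd f" "(u * f + w * p) dvd p"
    using euclidean_bezout_divisor by blast
  moreover define d where "d = u * f + w * p"
  ultimately have d: "d dvd f" "d dvd p" by simp_all
  then obtain e where e: "p = d * e" by (auto elim: dvdE)
  have "is_unit e"
  proof (rule ccontr)
    assume "\<not> is_unit e"
    moreover have "e \<noteq> 0" using e sqf by auto
    ultimately obtain q where q: "irreducible q" "q dvd e"
      using irreducible_divisor_exists by blast
    then have "q dvd p" using e by simp
    then have "q dvd f" using divisors q(1) by blast
    then have "q dvd d" using \<open>q dvd p\<close> by (simp add: d_def)
    then have "q ^ 2 dvd p" using q(2) e by (simp add: power2_eq_square mult_dvd_mono)
    then have "is_unit q" by (rule squarefreeD[OF sqf])
    then show False using q(1) by (simp add: irreducible_not_unit)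
  qed
  then show ?thesis using e d(1) by (simp add: mult_unit_dvd_iff)
qed

lemma maximal_subalgebraD:
  assumes "maximal_subalgebra scale mul M"
  shows "subalgebra scale mul M" and "M \<noteq> UNIV"
    and "subalgebra scale mul T \<Longrightarrow> M \<subseteq> T \<Longrightarrow> T = M \<or> T = UNIV"
  using assms by (simp_all add: maximal_subalgebra_def)

locale leibniz_alg =
  fixes scale :: "'f::field \<Rightarrow> 'v::ab_group_add \<Rightarrow> 'v" (infixr \<open>*s\<close> 75)
    and mul :: "'v \<Rightarrow> 'v \<Rightarrow> 'v"
  assumes leibniz: "leibniz_algebra scale mul"
begin

sublocale vs: vector_space scale
  using leibniz unfolding leibniz_algebra_def by auto

lemma mul_add_left: "mul (x + y) z = mul x z + mul y z"
  and mul_add_right: "mul x (y + z) = mul x y + mul x z"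
  and mul_scale_left: "mul (c *s x) y = c *s mul x y"
  and mul_scale_right: "mul x (c *s y) = c *s mul x y"
  using leibniz unfolding leibniz_algebra_def bilinear_product_def by auto

lemma leibniz_identity: "mul x (mul y z) = mul (mul x y) z + mul y (mul x z)"
  using leibniz unfolding leibniz_algebra_def left_leibniz_def by blast

lemma mul_zero_left [simp]: "mul 0 y = 0"
  using mul_add_left[of 0 0 y] by simp

lemma mul_zero_right [simp]: "mul x 0 = 0"
  using mul_add_right[of x 0 0] by simp

lemma mul_diff_left: "mul (x - y) z = mul x z - mul y z"
  using mul_add_left[of "x - y" y z] by (simp add: algebra_simps)

lemma mul_sum_right: "finite I \<Longrightarrow> mul x (\<Sum>i\<in>I. f i) = (\<Sum>i\<in>I. mul x (f i))"
  by (induction I rule: finite_induct) (auto simp: mul_add_right)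

lemma square_left_annihilates: "mul (mul x x) z = 0"
  using leibniz_identity[of x x z] by simp

lemma left_annihilator_mul_closed:
  assumes "\<And>z. mul u z = 0"
  shows "mul (mul x u) z = 0"
  using leibniz_identity[of x u z] assms by simp

end

locale cyclic_leibniz = leibniz_alg scale mul
    for scale :: "'f::field \<Rightarrow> 'v::ab_group_add \<Rightarrow> 'v" (infixr \<open>*s\<close> 75)
    and mul :: "'v \<Rightarrow> 'v \<Rightarrow> 'v" +
  fixes a :: 'v and n :: nat and \<alpha> :: "nat \<Rightarrow> 'f"
  assumes n_pos: "n \<ge> 1"
    and inj_lpow: "inj_on (lpow mul a) {1..n}"
    and independent_lpow: "\<not> module.dependent scale (lpow mul a ` {1..n})"
    and span_lpow: "module.span scale (lpow mul a ` {1..n}) = UNIV"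
    and top_relation: "mul a (lpow mul a n) = (\<Sum>k=2..n. scale (\<alpha> k) (lpow mul a k))"
begin

definition La :: "'v \<Rightarrow> 'v" where
  "La = mul a"

text \<open>\<open>b k = a\<^sup>k\<^sup>+\<^sup>1\<close>, the basis vectors indexed from \<open>0\<close>.\<close>

definition b :: "nat \<Rightarrow> 'v" where
  "b k = (La ^^ k) a"

definition A2 :: "'v set" where
  "A2 = vs.span (b ` {1..<n})"

abbreviation p :: "'f poly" where
  "p \<equiv> cyc_poly n \<alpha>"

lemma b_0 [simp]: "b 0 = a"
  by (simp add: b_def)

lemma b_Suc: "b (Suc k) = La (b k)"
  by (simp add: b_def)

lemma lpow_eq_b: "k \<ge> 1 \<Longrightarrow> lpow mul a k = b (k - 1)"
  by (simp add: lpow_def b_def La_def)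

lemma lpow_image: "lpow mul a ` {1..n} = b ` {0..<n}"
proof -
  have "{1..n} = Suc ` {0..<n}" by auto
  then have "lpow mul a ` {1..n} = (\<lambda>i. lpow mul a (Suc i)) ` {0..<n}"
    by (simp only: image_image)
  then show ?thesis by (simp add: lpow_eq_b)
qed

lemma span_b: "vs.span (b ` {0..<n}) = UNIV"
  using span_lpow lpow_image by simp

lemma independent_b: "vs.independent (b ` {0..<n})"
  using independent_lpow lpow_image by simp

lemma inj_b: "inj_on b {0..<n}"
proof (rule inj_onI)
  fix i j assume "i \<in> {0..<n}" "j \<in> {0..<n}" "b i = b j"
  then have "lpow mul a (Suc i) = lpow mul a (Suc j)" "Suc i \<in> {1..n}" "Suc j \<in> {1..n}"
    by (auto simp: lpow_eq_b)
  then show "i = j" using inj_onD[OF inj_lpow] by blast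
qed

lemma b_image_split: "b ` {0..<n} = insert a (b ` {1..<n})"
proof -
  have "{0..<n} = insert 0 {1..<n}" using n_pos by auto
  then show ?thesis by simp
qed

lemma La_add: "La (x + y) = La x + La y"
  and La_scale: "La (c *s x) = c *s La x"
  and La_zero [simp]: "La 0 = 0"
  and La_sum: "finite I \<Longrightarrow> La (\<Sum>i\<in>I. f i) = (\<Sum>i\<in>I. La (f i))"
  by (simp_all add: La_def mul_add_right mul_scale_right mul_sum_right)

lemma b_left_annihilates: "k \<ge> 1 \<Longrightarrow> mul (b k) z = 0"
proof (induction k arbitrary: z rule: dec_induct)
  case base
  show ?case using square_left_annihilates by (simp add: b_def La_def)
next
  case (step k)
  then show ?case using left_annihilator_mul_closed by (simp add: b_Suc La_def)
qed

lemma A2_subspace: "vs.subspace A2"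
  unfolding A2_def by simp

lemma b_in_A2: "1 \<le> k \<Longrightarrow> k < n \<Longrightarrow> b k \<in> A2"
  unfolding A2_def by (intro vs.span_base imageI) simp

lemma a_notin_A2: "a \<notin> A2"
proof
  assume "a \<in> A2"
  have "a \<notin> b ` {1..<n}"
  proof
    assume "a \<in> b ` {1..<n}"
    then obtain k where "k \<in> {1..<n}" "b 0 = b k" by auto
    then show False using inj_onD[OF inj_b] n_pos by fastforce
  qed
  then have "a \<in> vs.span (b ` {0..<n} - {a})"
    using \<open>a \<in> A2\<close> b_image_split unfolding A2_def by simp
  then have "vs.dependent (b ` {0..<n})"
    unfolding vs.dependent_def using b_image_split by blast
  then show False using independent_b by simp
qed

lemma decompose: "\<exists>s. x - s *s a \<in> A2"
  using span_b b_image_split vs.span_breakdown_eq unfolding A2_def by (metis UNIV_I)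

lemma A2_left_annihilates: "l \<in> A2 \<Longrightarrow> mul l z = 0"
  unfolding A2_def
proof (induction rule: vs.span_induct)
  case base
  show ?case unfolding vs.subspace_def by (auto simp: mul_add_left mul_scale_left)
next
  case (step x)
  then show ?case using b_left_annihilates by auto
qed

lemma mul_via_La: "x - s *s a \<in> A2 \<Longrightarrow> mul x y = s *s La y"
  using A2_left_annihilates[of "x - s *s a" y] by (simp add: mul_diff_left mul_scale_left La_def)

text \<open>The top relation says that \<open>La\<close> maps \<open>a\<^sup>n\<close> into \<open>A2\<close>; hence \<open>La\<close> maps \<open>A\<close> into \<open>A2\<close>.\<close>

lemma La_b_last: "La (b (n - 1)) = (\<Sum>k=2..n. \<alpha> k *s b (k - 1))"
proof -
  have "La (b (n - 1)) = mul a (lpow mul a n)"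
    using lpow_eq_b[OF n_pos] by (simp add: La_def)
  also have "\<dots> = (\<Sum>k=2..n. \<alpha> k *s lpow mul a k)"
    by (rule top_relation)
  also have "\<dots> = (\<Sum>k=2..n. \<alpha> k *s b (k - 1))"
    by (rule sum.cong) (auto simp: lpow_eq_b)
  finally show ?thesis .
qed

lemma La_into_A2: "La v \<in> A2"
proof -
  have "v \<in> vs.span (b ` {0..<n})" using span_b by simp
  then show ?thesis
  proof (induction rule: vs.span_induct)
    case base
    show ?case unfolding vs.subspace_def
      using A2_subspace by (simp add: La_add La_scale vs.subspace_add vs.subspace_scale vs.subspace_0)
  next
    case (step x)
    then obtain k where k: "k < n" "x = b k" by auto
    show ?case
    proof (cases "Suc k < n")
      case True
      then show ?thesis using k b_in_A2[of "Suc k"] by (simp add: b_Suc)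
    next
      case False
      then have "k = n - 1" using k by simp
      then have "x = b (n - 1)" using k by simp
      moreover have "(\<Sum>k=2..n. \<alpha> k *s b (k - 1)) \<in> A2"
        using A2_subspace b_in_A2 by (intro vs.subspace_sum vs.subspace_scale) auto
      ultimately show ?thesis using La_b_last by simp
    qed
  qed
qed

text \<open>Subspaces stable under \<open>La\<close> are exactly the \<open>F[x]\<close>-submodules of \<open>A\<close>
  (with \<open>x\<close> acting as \<open>La\<close>).\<close>

definition La_invariant :: "'v set \<Rightarrow> bool" where
  "La_invariant S \<longleftrightarrow> vs.subspace S \<and> (\<forall>y\<in>S. La y \<in> S)"

lemma invariant_subalgebra: "La_invariant S \<Longrightarrow> subalgebra scale mul S"
  unfolding subalgebra_def La_invariant_def
proof (intro conjI ballI; elim conjE)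
  fix x y assume S: "vs.subspace S" "\<forall>y\<in>S. La y \<in> S" and "y \<in> S"
  obtain s where "x - s *s a \<in> A2" using decompose by blast
  then have "mul x y = s *s La y" by (rule mul_via_La)
  then show "mul x y \<in> S" using S \<open>y \<in> S\<close> by (simp add: vs.subspace_scale)
qed

lemma subalgebra_not_in_A2_invariant:
  assumes S: "subalgebra scale mul S" and "\<not> S \<subseteq> A2"
  shows "La_invariant S"
proof -
  obtain x where x: "x \<in> S" "x \<notin> A2" using assms by auto
  obtain s where s: "x - s *s a \<in> A2" using decompose by blast
  then have "s \<noteq> 0" using x by auto
  have sub: "vs.subspace S" using S by (simp add: subalgebra_def)
  have "La y \<in> S" if "y \<in> S" for y
  proof -
    have "s *s La y \<in> S"
      using mul_via_La[OF s, of y] S x that unfolding subalgebra_def by metis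
    then have "inverse s *s (s *s La y) \<in> S" by (rule vs.subspace_scale[OF sub])
    then show ?thesis using \<open>s \<noteq> 0\<close> by simp
  qed
  then show ?thesis using sub by (simp add: La_invariant_def)
qed

lemma A2_subalgebra: "subalgebra scale mul A2"
  unfolding subalgebra_def using A2_subspace A2_left_annihilates vs.subspace_0 by auto

lemma invariant_containing_a: "La_invariant S \<Longrightarrow> a \<in> S \<Longrightarrow> S = UNIV"
proof -
  assume S: "La_invariant S" "a \<in> S"
  have "b k \<in> S" for k
    using S by (induction k) (auto simp: b_Suc La_invariant_def)
  then have "vs.span (b ` {0..<n}) \<subseteq> S"
    using S by (intro vs.span_minimal) (auto simp: La_invariant_def)
  then show ?thesis using span_b by auto
qed

lemma maximal_subalgebra_cases:
  assumes M: "maximal_subalgebra scale mul M"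
  shows "M = A2 \<or> La_invariant M"
proof (cases "M \<subseteq> A2")
  case True
  then have "A2 = M \<or> A2 = UNIV"
    by (rule maximal_subalgebraD(3)[OF M A2_subalgebra])
  then show ?thesis using a_notin_A2 by auto
next
  case False
  then show ?thesis
    using maximal_subalgebraD(1)[OF M] subalgebra_not_in_A2_invariant by blast
qed

text \<open>Evaluation of polynomials at the generator: \<open>ev f = f(La) a\<close>.  This identifies \<open>A\<close>
  with \<open>F[x]/(p)\<close> as an \<open>F[x]\<close>-module.\<close>

definition ev :: "'f poly \<Rightarrow> 'v" where
  "ev f = (\<Sum>i\<le>degree f. coeff f i *s b i)"

lemma ev_degree_bound: "degree f \<le> m \<Longrightarrow> ev f = (\<Sum>i\<le>m. coeff f i *s b i)"
  unfolding ev_def by (rule sum.mono_neutral_left) (auto simp: coeff_eq_0)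

lemma ev_add: "ev (f + g) = ev f + ev g"
proof -
  define m where "m = max (degree f) (degree g)"
  have "ev (f + g) = (\<Sum>i\<le>m. coeff (f + g) i *s b i)"
    by (rule ev_degree_bound) (simp add: m_def degree_add_le_max)
  also have "\<dots> = (\<Sum>i\<le>m. coeff f i *s b i) + (\<Sum>i\<le>m. coeff g i *s b i)"
    by (simp add: vs.scale_left_distrib sum.distrib)
  also have "\<dots> = ev f + ev g"
    using ev_degree_bound[of f m] ev_degree_bound[of g m] by (simp add: m_def)
  finally show ?thesis .
qed

lemma ev_smult: "ev (smult c f) = c *s ev f"
  using ev_degree_bound[OF degree_smult_le, of c f] by (simp add: ev_def vs.scale_sum_right)

lemma ev_0 [simp]: "ev 0 = 0"
  by (simp add: ev_def)

lemma ev_diff: "ev (f - g) = ev f - ev g"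
  using ev_add[of "f - g" g] by (simp add: algebra_simps)

lemma ev_sum: "finite I \<Longrightarrow> ev (\<Sum>i\<in>I. f i) = (\<Sum>i\<in>I. ev (f i))"
  by (induction I rule: finite_induct) (auto simp: ev_add)

lemma ev_monom: "ev (monom c k) = c *s b k"
proof -
  have "ev (monom c k) = (\<Sum>i\<le>k. coeff (monom c k) i *s b i)"
    by (rule ev_degree_bound[OF degree_monom_le])
  also have "\<dots> = (\<Sum>i\<le>k. if i = k then c *s b k else 0)"
    by (rule sum.cong) auto
  finally show ?thesis by simp
qed

lemma ev_1 [simp]: "ev 1 = a"
  using ev_monom[of 1 0] by (simp add: monom_0 one_pCons)

lemma ev_times_x: "ev (pCons 0 f) = La (ev f)"
proof -
  have "ev (pCons 0 f) = (\<Sum>i\<le>Suc (degree f). coeff (pCons 0 f) i *s b i)"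
    by (rule ev_degree_bound) (simp add: degree_pCons_le)
  also have "\<dots> = (\<Sum>i\<le>degree f. coeff f i *s b (Suc i))"
    by (subst sum.atMost_Suc_shift) simp
  also have "\<dots> = La (ev f)"
    by (simp add: ev_def La_sum La_scale b_Suc)
  finally show ?thesis .
qed

lemma ev_pCons: "ev (pCons c g) = c *s a + La (ev g)"
proof -
  have "pCons c g = monom c 0 + pCons 0 g" by (simp add: monom_0)
  then show ?thesis by (simp only: ev_add ev_monom ev_times_x b_0)
qed

lemma ev_mult_invariant: "La_invariant S \<Longrightarrow> ev f \<in> S \<Longrightarrow> ev (g * f) \<in> S"
proof (induction g)
  case (pCons c g)
  have "ev (pCons c g * f) = c *s ev f + La (ev (g * f))"
    by (simp add: ev_add ev_smult ev_times_x)
  also have "\<dots> \<in> S"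
    using pCons unfolding La_invariant_def by (meson vs.subspace_add vs.subspace_scale)
  finally show ?case .
qed (simp add: La_invariant_def vs.subspace_0)

lemma ev_surj: "\<exists>f. ev f = v"
proof -
  have "v \<in> vs.span (b ` {0..<n})" using span_b by simp
  then show ?thesis
  proof (induction rule: vs.span_induct)
    case base
    show ?case unfolding vs.subspace_def
    proof (intro conjI ballI allI)
      show "0 \<in> {v. \<exists>f. ev f = v}" using ev_0 by blast
      fix x y assume "x \<in> {v. \<exists>f. ev f = v}" "y \<in> {v. \<exists>f. ev f = v}"
      then show "x + y \<in> {v. \<exists>f. ev f = v}" using ev_add by blast
    next
      fix c x assume "x \<in> {v. \<exists>f. ev f = v}"
      then show "c *s x \<in> {v. \<exists>f. ev f = v}" using ev_smult by blast
    qed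
  next
    case (step x)
    then obtain k where "x = b k" by auto
    then have "ev (monom 1 k) = x" by (simp add: ev_monom)
    then show ?case by blast
  qed
qed

lemma ev_in_A2_iff: "ev f \<in> A2 \<longleftrightarrow> poly f 0 = 0"
proof (cases f)
  case (pCons c g)
  have rest: "La (ev g) \<in> A2" by (rule La_into_A2)
  have "ev f \<in> A2 \<longleftrightarrow> c *s a + La (ev g) \<in> A2"
    using pCons by (simp add: ev_pCons)
  also have "\<dots> \<longleftrightarrow> c *s a \<in> A2"
  proof
    assume "c *s a + La (ev g) \<in> A2"
    then have "c *s a + La (ev g) - La (ev g) \<in> A2"
      using rest by (rule vs.subspace_diff[OF A2_subspace])
    then show "c *s a \<in> A2" by simp
  qed (use rest vs.subspace_add[OF A2_subspace] in blast)
  also have "\<dots> \<longleftrightarrow> c = 0"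
  proof
    assume "c *s a \<in> A2"
    show "c = 0"
    proof (rule ccontr)
      assume "c \<noteq> 0"
      have "inverse c *s (c *s a) \<in> A2"
        using \<open>c *s a \<in> A2\<close> by (rule vs.subspace_scale[OF A2_subspace])
      then show False using \<open>c \<noteq> 0\<close> a_notin_A2 by simp
    qed
  qed (simp add: vs.subspace_0[OF A2_subspace])
  finally show ?thesis using pCons by simp
qed

lemma degree_p: "degree p = n"
proof -
  define tail where "tail = (\<Sum>k=2..n. monom (\<alpha> k) (k - 1))"
  have "degree tail < n"
    using n_pos unfolding tail_def
    by (intro le_less_trans[OF degree_sum_le[of _ _ "n - 1"]]) (auto intro: le_trans[OF degree_monom_le])
  then have "degree (monom 1 n + - tail) = degree (monom (1::'f) n)"
    by (intro degree_add_eq_left) (simp add: degree_monom_eq)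
  then show ?thesis by (simp add: cyc_poly_def tail_def degree_monom_eq)
qed

lemma p_nonzero: "p \<noteq> 0"
  using degree_p n_pos by auto

lemma poly_p_0: "poly p 0 = 0"
proof -
  have "(\<Sum>k=2..n. \<alpha> k * 0 ^ (k - 1)) = 0"
    by (rule sum.neutral) auto
  then show ?thesis using n_pos by (simp add: cyc_poly_def poly_sum poly_monom)
qed

lemma ev_p: "ev p = 0"
proof -
  have "ev p = b n - (\<Sum>k=2..n. \<alpha> k *s b (k - 1))"
    by (simp add: cyc_poly_def ev_diff ev_sum ev_monom)
  also have "b n = La (b (n - 1))"
    using b_Suc[of "n - 1"] n_pos by simp
  finally show ?thesis using La_b_last by simp
qed

text \<open>Linear independence of \<open>b 0, \<dots>, b (n - 1)\<close>: \<open>ev\<close> is injective in degree below \<open>n\<close>.\<close>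

lemma ev_low_degree_injective:
  assumes "degree r < n" and "ev r = 0"
  shows "r = 0"
proof -
  have ev_r: "ev r = (\<Sum>i\<in>{0..<n}. coeff r i *s b i)"
    using ev_degree_bound[of r "n - 1"] assms(1) n_pos
    by (simp add: atLeast0LessThan lessThan_Suc_atMost[symmetric])
  define u where "u v = coeff r (the_inv_into {0..<n} b v)" for v
  have "(\<Sum>v\<in>b ` {0..<n}. u v *s v) = (\<Sum>i\<in>{0..<n}. coeff r i *s b i)"
    by (simp add: sum.reindex[OF inj_b] u_def the_inv_into_f_f[OF inj_b])
  then have combination: "(\<Sum>v\<in>b ` {0..<n}. u v *s v) = 0"
    using assms(2) ev_r by simp
  have "coeff r i = 0" for i
  proof (cases "i < n")
    case True
    then have "u (b i) = 0" using vs.independentD[OF independent_b _ _ combination] by auto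
    then show ?thesis using True by (simp add: u_def the_inv_into_f_f[OF inj_b])
  next
    case False
    then show ?thesis using assms(1) by (simp add: coeff_eq_0)
  qed
  then show ?thesis by (simp add: poly_eq_iff)
qed

lemma ev_mult_p: "ev (g * p) = 0"
  using ev_mult_invariant[of "{0}" p g] ev_p by (simp add: La_invariant_def)

lemma ev_eq_0_iff: "ev f = 0 \<longleftrightarrow> p dvd f"
proof
  assume "ev f = 0"
  have "f = f div p * p + f mod p" by (rule div_mult_mod_eq[symmetric])
  then have "ev f = ev (f div p * p) + ev (f mod p)"
    by (metis ev_add)
  then have "ev (f mod p) = 0"
    using \<open>ev f = 0\<close> ev_mult_p by simp
  moreover have "f mod p = 0 \<or> degree (f mod p) < n"
    using degree_mod_less[OF p_nonzero] degree_p by simp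
  ultimately have "f mod p = 0" using ev_low_degree_injective by blast
  then show "p dvd f" by (simp add: mod_eq_0_iff_dvd)
next
  assume "p dvd f"
  then show "ev f = 0" using ev_mult_p by (auto simp: mult.commute elim: dvdE)
qed

lemma ev_eq_iff: "ev f = ev g \<longleftrightarrow> p dvd (f - g)"
  using ev_eq_0_iff[of "f - g"] by (simp add: ev_diff)

lemma ev_image_invariant:
  assumes zero: "0 \<in> I"
    and add: "\<And>f g. f \<in> I \<Longrightarrow> g \<in> I \<Longrightarrow> f + g \<in> I"
    and mult: "\<And>f h. f \<in> I \<Longrightarrow> h * f \<in> I"
  shows "La_invariant (ev ` I)"
  unfolding La_invariant_def vs.subspace_def
proof (intro conjI ballI allI)
  have "ev 0 \<in> ev ` I" using zero by (rule imageI)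
  then show "0 \<in> ev ` I" by simp
  fix x y assume "x \<in> ev ` I" "y \<in> ev ` I"
  then obtain f g where fg: "f \<in> I" "g \<in> I" "x = ev f" "y = ev g" by auto
  have "ev (f + g) \<in> ev ` I" using add[OF fg(1,2)] by (rule imageI)
  then show "x + y \<in> ev ` I" using fg(3,4) by (simp add: ev_add)
next
  fix c x assume "x \<in> ev ` I"
  then obtain f where f: "f \<in> I" "x = ev f" by auto
  have "ev ([:c:] * f) \<in> ev ` I" using mult[OF f(1)] by (rule imageI)
  then show "c *s x \<in> ev ` I" using f(2) by (simp add: ev_smult)
next
  fix x assume "x \<in> ev ` I"
  then obtain f where f: "f \<in> I" "x = ev f" by auto
  have "ev ([:0, 1:] * f) \<in> ev ` I" using mult[OF f(1)] by (rule imageI)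
  then show "La x \<in> ev ` I" using f(2) by (simp add: ev_times_x)
qed

definition ev_multiples :: "'f poly \<Rightarrow> 'v set" where
  "ev_multiples q = ev ` {g. q dvd g}"

lemma ev_multiples_invariant: "La_invariant (ev_multiples q)"
  unfolding ev_multiples_def by (rule ev_image_invariant) auto

lemma ev_multiples_mem:
  assumes "q dvd p"
  shows "ev f \<in> ev_multiples q \<longleftrightarrow> q dvd f"
proof
  assume "ev f \<in> ev_multiples q"
  then obtain g where g: "q dvd g" "ev f = ev g" by (auto simp: ev_multiples_def)
  then have "q dvd (f - g)" using assms ev_eq_iff dvd_trans by blast
  then have "q dvd (f - g) + g" using g(1) by (rule dvd_add)
  then show "q dvd f" by simp
qed (auto simp: ev_multiples_def)

lemma A2_subset_ev_multiples:
  assumes "irreducible q" and "poly q 0 = 0"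
  shows "A2 \<subseteq> ev_multiples q"
proof
  have "[:0, 1:] dvd q" using assms(2) by (simp add: poly_eq_0_iff_dvd)
  moreover have "\<not> is_unit [:0, 1::'f:]" by (simp add: is_unit_iff_degree)
  ultimately have q_dvd_x: "q dvd [:0, 1:]" using irreducibleD'[OF assms(1)] by blast
  fix v assume "v \<in> A2"
  obtain f where f: "ev f = v" using ev_surj by blast
  then have "poly f 0 = 0" using \<open>v \<in> A2\<close> ev_in_A2_iff by blast
  then have "[:0, 1:] dvd f" by (simp add: poly_eq_0_iff_dvd)
  then have "q dvd f" using q_dvd_x dvd_trans by blast
  then show "v \<in> ev_multiples q" using f by (auto simp: ev_multiples_def)
qed

lemma invariant_beyond_ev_multiples:
  assumes q: "irreducible q" and S: "La_invariant S" "ev_multiples q \<subseteq> S"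
    and beyond: "x \<in> S" "x \<notin> ev_multiples q"
  shows "S = UNIV"
proof -
  obtain f where f: "ev f = x" using ev_surj by blast
  then have "\<not> q dvd f" using beyond by (auto simp: ev_multiples_def)
  then obtain u w where bezout: "u * q + w * f = 1" using irreducible_bezout q by blast
  have "ev (u * q) \<in> S" using S by (auto simp: ev_multiples_def)
  moreover have "ev (w * f) \<in> S" using ev_mult_invariant S(1) beyond f by blast
  ultimately have "ev (u * q) + ev (w * f) \<in> S"
    using S(1) by (simp add: La_invariant_def vs.subspace_add)
  also have "ev (u * q) + ev (w * f) = a"
    using bezout ev_add[of "u * q" "w * f"] by simp
  finally have "a \<in> S" .
  then show ?thesis using invariant_containing_a S(1) by blast
qed

lemma ev_multiples_maximal:
  assumes q: "irreducible q" "q dvd p"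
  shows "maximal_subalgebra scale mul (ev_multiples q)"
  unfolding maximal_subalgebra_def
proof (intro conjI allI impI)
  show "subalgebra scale mul (ev_multiples q)"
    by (rule invariant_subalgebra[OF ev_multiples_invariant])
  have "\<not> q dvd 1" using q(1) by (rule irreducible_not_unit)
  then show "ev_multiples q \<noteq> UNIV" using ev_multiples_mem[OF q(2), of 1] by auto
  fix S assume S: "subalgebra scale mul S \<and> ev_multiples q \<subseteq> S"
  show "S = ev_multiples q \<or> S = UNIV"
  proof (cases "S \<subseteq> A2")
    case True
    have "ev q \<in> S" using S by (auto simp: ev_multiples_def)
    then have "poly q 0 = 0" using True ev_in_A2_iff by blast
    then show ?thesis using True S A2_subset_ev_multiples[OF q(1)] by blast
  next
    case False
    then have "La_invariant S" using S subalgebra_not_in_A2_invariant by blast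
    then show ?thesis using S invariant_beyond_ev_multiples[OF q(1)] by blast
  qed
qed

lemma zero_in_frattini: "0 \<in> frattini scale mul"
proof -
  have "0 \<in> M" if "maximal_subalgebra scale mul M" for M
    using maximal_subalgebraD(1)[OF that] vs.subspace_0 by (simp add: subalgebra_def)
  then show ?thesis by (simp add: frattini_def)
qed

text \<open>If \<open>p\<close> is squarefree, an element \<open>f(La) a\<close> of all \<open>q A\<close> has \<open>f\<close> divisible by every irreducible
  factor of \<open>p\<close>, hence by \<open>p\<close>, so it vanishes.\<close>

lemma frattini_trivial_if_squarefree:
  assumes sqf: "squarefree p"
  shows "frattini scale mul = {0}"
proof -
  have "v = 0" if v: "v \<in> frattini scale mul" for v
  proof -
    obtain f where f: "ev f = v" using ev_surj by blast
    have "q dvd f" if "irreducible q" "q dvd p" for q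
      using v f ev_multiples_maximal[OF that] ev_multiples_mem[OF that(2)]
      unfolding frattini_def by blast
    then have "p dvd f" using squarefree_dvd_if_irreducible_divisors_dvd[OF sqf] by blast
    then show "v = 0" using f ev_eq_0_iff by blast
  qed
  then show ?thesis using zero_in_frattini by blast
qed

text \<open>Maximal invariant subalgebras are prime: the corresponding ideal of \<open>F[x]\<close> is a
  maximal ideal.  The key step enlarges \<open>M\<close> by the submodule generated by \<open>ev g\<close>.\<close>

definition extend :: "'v set \<Rightarrow> 'f poly \<Rightarrow> 'v set" where
  "extend M g = ev ` {f + w * g | f w. ev f \<in> M}"

lemma extend_invariant:
  assumes "La_invariant M"
  shows "La_invariant (extend M g)"
  unfolding extend_def
proof (rule ev_image_invariant)
  have sub: "vs.subspace M" using assms by (simp add: La_invariant_def)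
  show "0 \<in> {f + w * g | f w. ev f \<in> M}"
    using vs.subspace_0[OF sub] by (intro CollectI exI[of _ 0] conjI) simp_all
  fix f1 f2 assume "f1 \<in> {f + w * g | f w. ev f \<in> M}" "f2 \<in> {f + w * g | f w. ev f \<in> M}"
  then obtain h1 w1 h2 w2 where "f1 = h1 + w1 * g" "f2 = h2 + w2 * g" "ev h1 \<in> M" "ev h2 \<in> M"
    by auto
  then have "f1 + f2 = (h1 + h2) + (w1 + w2) * g" "ev (h1 + h2) \<in> M"
    using sub by (simp_all add: algebra_simps ev_add vs.subspace_add)
  then show "f1 + f2 \<in> {f + w * g | f w. ev f \<in> M}" by blast
next
  fix f1 h assume "f1 \<in> {f + w * g | f w. ev f \<in> M}"
  then obtain h1 w1 where "f1 = h1 + w1 * g" "ev h1 \<in> M" by auto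
  then have "h * f1 = h * h1 + (h * w1) * g" "ev (h * h1) \<in> M"
    using ev_mult_invariant[OF assms] by (simp_all add: algebra_simps)
  then show "h * f1 \<in> {f + w * g | f w. ev f \<in> M}" by blast
qed

lemma extend_contains: "M \<subseteq> extend M g" "ev g \<in> extend M g" if "La_invariant M"
proof -
  show "M \<subseteq> extend M g"
  proof
    fix m assume "m \<in> M"
    obtain f where "ev f = m" using ev_surj by blast
    moreover have "f + 0 * g \<in> {f + w * g | f w. ev f \<in> M}"
      using calculation \<open>m \<in> M\<close> by blast
    then have "ev (f + 0 * g) \<in> extend M g" unfolding extend_def by (rule imageI)
    ultimately show "m \<in> extend M g" by simp
  qed
  have "ev 0 \<in> M" using that vs.subspace_0 by (simp add: La_invariant_def)
  then have "0 + 1 * g \<in> {f + w * g | f w. ev f \<in> M}" by blast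
  then have "ev (0 + 1 * g) \<in> extend M g" unfolding extend_def by (rule imageI)
  then show "ev g \<in> extend M g" by simp
qed

text \<open>If \<open>g(La) a\<close> is outside a maximal invariant subalgebra \<open>M\<close>, then \<open>M + F[x] g(La) a = A\<close>,
  so \<open>1 \<equiv> w g\<close> modulo the ideal of \<open>M\<close>.\<close>

lemma maximal_invariant_escape:
  assumes M: "maximal_subalgebra scale mul M" "La_invariant M" and g: "ev g \<notin> M"
  shows "\<exists>w. ev (1 - w * g) \<in> M"
proof -
  have "subalgebra scale mul (extend M g)"
    using invariant_subalgebra extend_invariant M(2) by blast
  moreover have "extend M g \<noteq> M" using extend_contains(2)[OF M(2)] g by blast
  ultimately have "extend M g = UNIV"
    using maximal_subalgebraD(3)[OF M(1) _ extend_contains(1)[OF M(2)]] by blast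
  then have "a \<in> extend M g" by simp
  then obtain f w where fw: "a = ev (f + w * g)" "ev f \<in> M"
    unfolding extend_def by blast
  have "ev (1 - w * g) = ev (f + w * g) - ev (w * g)"
    by (simp add: ev_diff fw(1)[symmetric])
  also have "\<dots> = ev f"
    by (simp add: ev_add)
  finally show ?thesis using fw(2) by metis
qed

lemma maximal_invariant_prime:
  assumes M: "maximal_subalgebra scale mul M" "La_invariant M" and fg: "ev (f * g) \<in> M"
  shows "ev f \<in> M \<or> ev g \<in> M"
proof (rule ccontr)
  assume "\<not> (ev f \<in> M \<or> ev g \<in> M)"
  then have "ev f \<notin> M" "ev g \<notin> M" by simp_all
  then obtain w1 w2 where w1: "ev (1 - w1 * f) \<in> M" and w2: "ev (1 - w2 * g) \<in> M"
    using maximal_invariant_escape[OF M] by blast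
  have one: "1 = (1 - w1 * f) + (w1 * f) * (1 - w2 * g) + (w1 * w2) * (f * g)"
    by (simp add: algebra_simps)
  have "ev ((w1 * f) * (1 - w2 * g)) \<in> M" "ev ((w1 * w2) * (f * g)) \<in> M"
    using ev_mult_invariant[OF M(2) w2] ev_mult_invariant[OF M(2) fg] by simp_all
  then have "ev (1 - w1 * f) + ev ((w1 * f) * (1 - w2 * g)) + ev ((w1 * w2) * (f * g)) \<in> M"
    using w1 M(2) by (simp add: La_invariant_def vs.subspace_add)
  then have "ev 1 \<in> M" using one by (simp only: ev_add[symmetric])
  then have "M = UNIV" using invariant_containing_a M(2) by simp
  then show False using maximal_subalgebraD(2)[OF M(1)] by simp
qed

text \<open>If \<open>d\<^sup>2\<close> divides \<open>p\<close> for a non-unit \<open>d\<close>, then \<open>h = p / d\<close> gives a nonzero element of the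
  Frattini subalgebra: it lies in \<open>A2\<close> because \<open>h(0) = 0\<close>, and in every maximal invariant \<open>M\<close>
  by primality, since \<open>d h = p\<close> and \<open>h\<close> is a multiple of \<open>d\<close>.\<close>

lemma squarefree_if_frattini_trivial:
  assumes frattini: "frattini scale mul = {0}"
  shows "squarefree p"
proof (rule ccontr)
  assume "\<not> squarefree p"
  then obtain d where d: "d ^ 2 dvd p" "\<not> is_unit d" by (rule not_squarefreeE)
  then obtain k where k: "p = d ^ 2 * k" by (auto elim: dvdE)
  define h where "h = d * k"
  have p_eq: "p = d * h" using k by (simp add: h_def power2_eq_square)
  have "ev h \<noteq> 0"
  proof
    assume "ev h = 0"
    then have "d * h dvd 1 * h" using p_eq ev_eq_0_iff by simp
    moreover have "h \<noteq> 0" using p_eq p_nonzero by auto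
    ultimately show False using d(2) by simp
  qed
  moreover have "ev h \<in> M" if M: "maximal_subalgebra scale mul M" for M
    using maximal_subalgebra_cases[OF M]
  proof
    assume "M = A2"
    have "poly d 0 * poly h 0 = 0" using poly_p_0 p_eq by simp
    then have "poly h 0 = 0" by (auto simp: h_def)
    then show ?thesis using \<open>M = A2\<close> ev_in_A2_iff by simp
  next
    assume inv: "La_invariant M"
    have "ev (d * h) \<in> M" using ev_p p_eq inv vs.subspace_0 by (simp add: La_invariant_def)
    then have "ev d \<in> M \<or> ev h \<in> M" by (rule maximal_invariant_prime[OF M inv])
    then show ?thesis using ev_mult_invariant[OF inv, of d k] by (auto simp: h_def mult.commute)
  qed
  ultimately show False using frattini unfolding frattini_def by blast
qed

end

theorem mainTheorem8:
  fixes scale :: "'f::field \<Rightarrow> 'v::ab_group_add \<Rightarrow> 'v"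
    and mul :: "'v \<Rightarrow> 'v \<Rightarrow> 'v"
    and a :: 'v and n :: nat and \<alpha> :: "nat \<Rightarrow> 'f"
  assumes "leibniz_algebra scale mul"
    and "generated_by scale mul a"
    and "n \<ge> 1"
    and "inj_on (lpow mul a) {1..n}"
    and "\<not> module.dependent scale (lpow mul a ` {1..n})"
    and "module.span scale (lpow mul a ` {1..n}) = UNIV"
    and "mul a (lpow mul a n) = (\<Sum>k=2..n. scale (\<alpha> k) (lpow mul a k))"
  shows "frattini scale mul = {0} \<longleftrightarrow> squarefree (cyc_poly n \<alpha>)"
proof -
  interpret cyclic_leibniz scale mul a n \<alpha>
    using assms by unfold_locales auto
  show ?thesis
    using frattini_trivial_if_squarefree squarefree_if_frattini_trivial by blast
qed

end
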